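(* Let $\mathbb{X}$ be a finite set, $\mathcal{H}_A$ a Hilbert space of finite dimension $d_A$, $\{\rho_A^x\}_{x\in\mathbb{X}}$ density operators on $\mathcal{H}_A$, $U_\theta$ a unitary on $\mathcal{H}_A$, $O=\{O_c\}_c$ a POVM on $\mathcal{H}_A$ with finitely many outcomes, and $p\in[0,1]$. Let $\mathcal{D}_{p,d_A}(\rho)=\frac{p}{d_A}I+(1-p)\rho$ and \[ \Gamma(\mathcal{D}_{p,d_A})=\max_{x\in\mathbb{X}}\sum_c\big|\operatorname{tr}(O_cU_\theta\rho_A^xU_\theta^\dagger)-\operatorname{tr}(O_c\mathcal{D}_{p,d_A}(U_\theta\rho_A^xU_\theta^\dagger))\big|. \] Then, writing $\mathcal{D}_{p,d_A}(\rho_A)$ for the family $\{\mathcal{D}_{p,d_A}(\rho_A^x)\}_{x\in\mathbb{X}}$, \[ \mathcal{B}(X\rightarrow A)_{\mathcal{D}_{p,d_A}(\rho_A)}\leq\mathcal{R}(X\rightarrow A)_{\mathcal{D}_{p,d_A}(\rho_A)}\leq\log\Big((1-2d_A)+\frac{4d_A}{\Gamma(\mathcal{D}_{p,d_A})}\Big), \] with the right-hand side interpreted as $+\infty$ when $\Gamma(\mathcal{D}_{p,d_A})=0$.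
   Context: All logarithms are base 2. For a density operator $\rho$ and positive semi-definite $\sigma$, $\widetilde{D}_\infty(\rho\|\sigma)=\log\inf\{\mu\in\mathbb{R}:\rho\leq\mu\sigma\}$ ($+\infty$ if $\operatorname{supp}\rho\not\subseteq\operatorname{supp}\sigma$). For a family $\{\tau^x\}_{x\in\mathbb{X}}$ of density operators, $\mathcal{B}=\min_{\pi\in\Delta(\mathbb{X})}\max_x\widetilde{D}_\infty(\tau^x\|\sum_{x'}\pi(x')\tau^{x'})$ (with $\Delta(\mathbb{X})$ the probability mass functions on $\mathbb{X}$) and $\mathcal{R}=\max_{x,x'}\widetilde{D}_\infty(\tau^x\|\tau^{x'})$. *)

theory Defs
  imports Complex_Main "HOL-Library.Extended_Real" "Jordan_Normal_Form.Matrix"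
begin

definition trace :: "complex mat \<Rightarrow> complex" where
  "trace A = (\<Sum>i<dim_row A. A $$ (i,i))"

definition adjoint_mat :: "complex mat \<Rightarrow> complex mat" where
  "adjoint_mat A = mat (dim_col A) (dim_row A) (\<lambda>(i,j). cnj (A $$ (j,i)))"

definition qform :: "complex mat \<Rightarrow> complex vec \<Rightarrow> complex" where
  "qform A v = (\<Sum>i<dim_vec v. \<Sum>j<dim_vec v. cnj (v $ i) * A $$ (i,j) * v $ j)"

definition psd :: "nat \<Rightarrow> complex mat \<Rightarrow> bool" where
  "psd d A \<longleftrightarrow> A \<in> carrier_mat d d \<and> adjoint_mat A = A \<and>
     (\<forall>v \<in> carrier_vec d. Im (qform A v) = 0 \<and> Re (qform A v) \<ge> 0)"

definition density :: "nat \<Rightarrow> complex mat \<Rightarrow> bool" where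
  "density d \<rho> \<longleftrightarrow> psd d \<rho> \<and> trace \<rho> = 1"

definition unitary :: "nat \<Rightarrow> complex mat \<Rightarrow> bool" where
  "unitary d U \<longleftrightarrow> U \<in> carrier_mat d d \<and> U * adjoint_mat U = 1\<^sub>m d \<and> adjoint_mat U * U = 1\<^sub>m d"

definition msum :: "nat \<Rightarrow> ('c \<Rightarrow> complex mat) \<Rightarrow> 'c set \<Rightarrow> complex mat" where
  "msum d f S = mat d d (\<lambda>(i,j). \<Sum>s\<in>S. f s $$ (i,j))"

definition povm :: "nat \<Rightarrow> 'c set \<Rightarrow> ('c \<Rightarrow> complex mat) \<Rightarrow> bool" where
  "povm d C Ob \<longleftrightarrow> finite C \<and> (\<forall>c\<in>C. psd d (Ob c)) \<and> msum d Ob C = 1\<^sub>m d"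

definition loewner_le :: "nat \<Rightarrow> complex mat \<Rightarrow> complex mat \<Rightarrow> bool" where
  "loewner_le d A B \<longleftrightarrow> psd d (B - A)"

definition supp :: "nat \<Rightarrow> complex mat \<Rightarrow> complex vec set" where
  "supp d A = {A *\<^sub>v v | v. v \<in> carrier_vec d}"

definition Dmax :: "nat \<Rightarrow> complex mat \<Rightarrow> complex mat \<Rightarrow> ereal" where
  "Dmax d \<rho> \<sigma> = (if supp d \<rho> \<subseteq> supp d \<sigma>
      then ereal (log 2 (Inf {\<mu>::real. loewner_le d \<rho> (complex_of_real \<mu> \<cdot>\<^sub>m \<sigma>)}))
      else \<infinity>)"

definition pmfs :: "'x set \<Rightarrow> ('x \<Rightarrow> real) set" where
  "pmfs X = {\<pi>. (\<forall>x\<in>X. \<pi> x \<ge> 0) \<and> (\<Sum>x\<in>X. \<pi> x) = 1}"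

definition Bq :: "nat \<Rightarrow> 'x set \<Rightarrow> ('x \<Rightarrow> complex mat) \<Rightarrow> ereal" where
  "Bq d X \<tau> = (INF \<pi>\<in>pmfs X. Max ((\<lambda>x. Dmax d (\<tau> x)
        (msum d (\<lambda>x'. complex_of_real (\<pi> x') \<cdot>\<^sub>m \<tau> x') X)) ` X))"

definition Rq :: "nat \<Rightarrow> 'x set \<Rightarrow> ('x \<Rightarrow> complex mat) \<Rightarrow> ereal" where
  "Rq d X \<tau> = Max ((\<lambda>(x,x'). Dmax d (\<tau> x) (\<tau> x')) ` (X \<times> X))"

definition depol :: "real \<Rightarrow> nat \<Rightarrow> complex mat \<Rightarrow> complex mat" where
  "depol p d \<rho> = complex_of_real (p / real d) \<cdot>\<^sub>m 1\<^sub>m d + complex_of_real (1 - p) \<cdot>\<^sub>m \<rho>"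

definition Gamma_depol :: "real \<Rightarrow> nat \<Rightarrow> 'x set \<Rightarrow> ('x \<Rightarrow> complex mat) \<Rightarrow> complex mat
     \<Rightarrow> 'c set \<Rightarrow> ('c \<Rightarrow> complex mat) \<Rightarrow> real" where
  "Gamma_depol p d X \<rho> U C Ob = Max ((\<lambda>x. \<Sum>c\<in>C.
       cmod (trace (Ob c * (U * \<rho> x * adjoint_mat U))
           - trace (Ob c * depol p d (U * \<rho> x * adjoint_mat U)))) ` X)"

end

(*
  Every density rho satisfies 0 <= rho <= I, so the depolarized states lie between
  (p/d) I and (p/d + 1 - p) I.  Hence D(rho^x) <= (1 + d(1-p)/p) D(rho^x') for all x, x',
  and since D(rho^x') is invertible this bounds R by log (1 + d(1-p)/p); B <= R by
  choosing a point mass for pi.  On the other hand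
  tr(O_c sigma) - tr(O_c D(sigma)) = p tr(O_c sigma) - (p/d) tr O_c with both traces
  nonnegative, so summing over the POVM gives Gamma <= 2p, which turns the bound into
  log (1 - 2d + 4d/Gamma).

  Nonnegativity of tr(W A) for positive semidefinite W and A is obtained by repeatedly
  splitting off the rank-one part A e_k e_k^* A / A_kk of A: the remainder (a Schur
  complement) is again positive semidefinite and the split-off part contributes a
  nonnegative quadratic form of W.
*)
theory Submission
  imports Defs "HOL-Library.Complex_Order" "HOL-Analysis.Convex" "Jordan_Normal_Form.Determinant"
begin

section \<open>Quadratic forms and positive semidefinite matrices\<close>

text \<open>Vectors are represented by functions \<^typ>\<open>nat \<Rightarrow> complex\<close> of which only the
  first \<open>d\<close> values matter; this avoids carrier side conditions.\<close>

definition quad_form :: "nat \<Rightarrow> complex mat \<Rightarrow> (nat \<Rightarrow> complex) \<Rightarrow> complex" where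
  "quad_form d A f = (\<Sum>i<d. \<Sum>j<d. cnj (f i) * A $$ (i,j) * f j)"

definition outer :: "nat \<Rightarrow> (nat \<Rightarrow> complex) \<Rightarrow> complex mat" where
  "outer d g = mat d d (\<lambda>(i,j). g i * cnj (g j))"

definition sqnorm :: "nat \<Rightarrow> (nat \<Rightarrow> complex) \<Rightarrow> real" where
  "sqnorm d f = (\<Sum>i<d. (cmod (f i))\<^sup>2)"

lemma qform_eq_quad_form: "v \<in> carrier_vec d \<Longrightarrow> qform A v = quad_form d A (\<lambda>i. v $ i)"
  by (simp add: qform_def quad_form_def)

lemma quad_form_eq_scalar_prod:
  "A \<in> carrier_mat d d \<Longrightarrow> quad_form d A f = conjugate (vec d f) \<bullet> (A *\<^sub>v vec d f)"
  unfolding quad_form_def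
  by (simp add: scalar_prod_def mult_mat_vec_def lessThan_atLeast0 sum_distrib_left mult_ac)

lemma sqnorm_nonneg: "0 \<le> sqnorm d f"
  unfolding sqnorm_def by (simp add: sum_nonneg)

lemma sqnorm_eq_0_iff: "sqnorm d f = 0 \<longleftrightarrow> (\<forall>i<d. f i = 0)"
  unfolding sqnorm_def by (subst sum_nonneg_eq_0_iff) auto

lemma quad_form_add:
  "A \<in> carrier_mat d d \<Longrightarrow> B \<in> carrier_mat d d \<Longrightarrow> quad_form d (A + B) f = quad_form d A f + quad_form d B f"
  unfolding quad_form_def by (simp add: sum.distrib[symmetric] algebra_simps)

lemma quad_form_minus:
  "A \<in> carrier_mat d d \<Longrightarrow> B \<in> carrier_mat d d \<Longrightarrow> quad_form d (A - B) f = quad_form d A f - quad_form d B f"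
  unfolding quad_form_def by (simp add: sum_subtractf[symmetric] algebra_simps)

lemma quad_form_smult: "A \<in> carrier_mat d d \<Longrightarrow> quad_form d (c \<cdot>\<^sub>m A) f = c * quad_form d A f"
  unfolding quad_form_def by (simp add: sum_distrib_left mult_ac)

lemma quad_form_one: "quad_form d (1\<^sub>m d) f = of_real (sqnorm d f)"
proof -
  have "quad_form d (1\<^sub>m d) f = (\<Sum>i<d. \<Sum>j<d. if j = i then cnj (f i) * f j else 0)"
    unfolding quad_form_def by (intro sum.cong refl) auto
  also have "\<dots> = (\<Sum>i<d. f i * cnj (f i))"
    by (simp add: mult.commute)
  also have "\<dots> = of_real (sqnorm d f)"
    unfolding sqnorm_def of_real_sum complex_norm_square ..
  finally show ?thesis .
qed

lemma quad_form_outer: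
  "quad_form d (outer d g) f = of_real ((cmod (\<Sum>i<d. cnj (g i) * f i))\<^sup>2)"
proof -
  have "quad_form d (outer d g) f = (\<Sum>i<d. \<Sum>j<d. (cnj (f i) * g i) * (cnj (g j) * f j))"
    unfolding quad_form_def outer_def by (intro sum.cong refl) (simp add: mult.assoc)
  also have "\<dots> = cnj (\<Sum>i<d. cnj (g i) * f i) * (\<Sum>j<d. cnj (g j) * f j)"
    unfolding sum_product[symmetric] by (simp add: ac_simps)
  finally show ?thesis
    by (simp only: complex_norm_square mult.commute)
qed

lemma adjoint_mat_dim [simp]:
  "dim_row (adjoint_mat A) = dim_col A" "dim_col (adjoint_mat A) = dim_row A"
  by (simp_all add: adjoint_mat_def)

lemma adjoint_mat_carrier [simp]: "A \<in> carrier_mat n m \<Longrightarrow> adjoint_mat A \<in> carrier_mat m n"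
  by (metis adjoint_mat_dim carrier_matD carrier_matI)

lemma adjoint_mat_index [simp]:
  "i < dim_col A \<Longrightarrow> j < dim_row A \<Longrightarrow> adjoint_mat A $$ (i,j) = cnj (A $$ (j,i))"
  by (simp add: adjoint_mat_def)

lemma adjoint_mat_eq_iff:
  assumes "A \<in> carrier_mat d d"
  shows "adjoint_mat A = A \<longleftrightarrow> (\<forall>i<d. \<forall>j<d. cnj (A $$ (i,j)) = A $$ (j,i))"
proof
  assume "adjoint_mat A = A"
  then show "\<forall>i<d. \<forall>j<d. cnj (A $$ (i,j)) = A $$ (j,i)"
    using assms by (metis adjoint_mat_index carrier_matD)
next
  assume "\<forall>i<d. \<forall>j<d. cnj (A $$ (i,j)) = A $$ (j,i)"
  then show "adjoint_mat A = A"
    using assms by (intro eq_matI) auto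
qed

lemma adjoint_mat_adjoint_mat [simp]: "adjoint_mat (adjoint_mat A) = A"
  by (intro eq_matI) auto

lemma adjoint_mat_add:
  "A \<in> carrier_mat n m \<Longrightarrow> B \<in> carrier_mat n m \<Longrightarrow> adjoint_mat (A + B) = adjoint_mat A + adjoint_mat B"
  by (intro eq_matI) auto

lemma adjoint_mat_minus:
  "A \<in> carrier_mat n m \<Longrightarrow> B \<in> carrier_mat n m \<Longrightarrow> adjoint_mat (A - B) = adjoint_mat A - adjoint_mat B"
  by (intro eq_matI) auto

lemma adjoint_mat_smult: "adjoint_mat (c \<cdot>\<^sub>m A) = cnj c \<cdot>\<^sub>m adjoint_mat A"
  by (intro eq_matI) auto

lemma adjoint_mat_one [simp]: "adjoint_mat (1\<^sub>m n) = 1\<^sub>m n"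
  by (intro eq_matI) auto

lemma adjoint_mat_mult:
  assumes "A \<in> carrier_mat n k" "B \<in> carrier_mat k m"
  shows "adjoint_mat (A * B) = adjoint_mat B * adjoint_mat A"
  using assms by (intro eq_matI) (auto simp: scalar_prod_def mult.commute)

lemma adjoint_mat_outer [simp]: "adjoint_mat (outer d g) = outer d g"
  by (intro eq_matI) (auto simp: outer_def mult.commute)

lemma psd_iff_quad_form:
  "psd d A \<longleftrightarrow> A \<in> carrier_mat d d \<and> adjoint_mat A = A \<and> (\<forall>f. 0 \<le> quad_form d A f)"
proof -
  have "(\<forall>v \<in> carrier_vec d. Im (qform A v) = 0 \<and> Re (qform A v) \<ge> 0) \<longleftrightarrow>
        (\<forall>f. 0 \<le> quad_form d A f)"
  proof
    assume "\<forall>v \<in> carrier_vec d. Im (qform A v) = 0 \<and> Re (qform A v) \<ge> 0"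
    then have "Im (qform A (vec d f)) = 0 \<and> Re (qform A (vec d f)) \<ge> 0" for f
      by simp
    moreover have "qform A (vec d f) = quad_form d A f" for f
      by (simp add: qform_def quad_form_def)
    ultimately show "\<forall>f. 0 \<le> quad_form d A f"
      by (simp add: less_eq_complex_def)
  qed (simp add: qform_eq_quad_form less_eq_complex_def)
  then show ?thesis
    unfolding psd_def by blast
qed

lemma psd_carrier: "psd d A \<Longrightarrow> A \<in> carrier_mat d d"
  by (simp add: psd_def)

lemma psd_adjoint_mat: "psd d A \<Longrightarrow> adjoint_mat A = A"
  by (simp add: psd_def)

lemma psd_cnj_index: "psd d A \<Longrightarrow> i < d \<Longrightarrow> j < d \<Longrightarrow> cnj (A $$ (i,j)) = A $$ (j,i)"
  using adjoint_mat_eq_iff psd_adjoint_mat psd_carrier by blast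

lemma psd_quad_form_nonneg: "psd d A \<Longrightarrow> 0 \<le> quad_form d A f"
  by (simp add: psd_iff_quad_form)

lemma psdI:
  "A \<in> carrier_mat d d \<Longrightarrow> adjoint_mat A = A \<Longrightarrow> (\<And>f. 0 \<le> quad_form d A f) \<Longrightarrow> psd d A"
  by (simp add: psd_iff_quad_form)

lemma quad_form_add_unit:
  assumes "k < d"
  shows "quad_form d A (\<lambda>i. f i + (if i = k then t else 0)) =
     quad_form d A f + cnj t * (\<Sum>j<d. A $$ (k,j) * f j) + t * (\<Sum>i<d. cnj (f i) * A $$ (i,k))
       + cnj t * t * A $$ (k,k)"
proof -
  have "quad_form d A (\<lambda>i. f i + (if i = k then t else 0)) =
     (\<Sum>i<d. \<Sum>j<d. cnj (f i) * A $$ (i,j) * f j + (if i = k then cnj t * A $$ (i,j) * f j else 0)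
        + (if j = k then cnj (f i) * A $$ (i,j) * t else 0)
        + (if i = k then (if j = k then cnj t * A $$ (i,j) * t else 0) else 0))"
    unfolding quad_form_def by (intro sum.cong refl) (auto simp: algebra_simps)
  also have "\<dots> = quad_form d A f + (\<Sum>j<d. cnj t * A $$ (k,j) * f j)
      + (\<Sum>i<d. cnj (f i) * A $$ (i,k) * t) + cnj t * A $$ (k,k) * t"
  proof -
    have row: "(\<Sum>i<d. \<Sum>j<d. if i = k then h i j else 0) = (\<Sum>j<d. h k j)"
      for h :: "nat \<Rightarrow> nat \<Rightarrow> complex"
      using assms by (subst sum.swap) simp
    show ?thesis
      using assms by (simp add: quad_form_def sum.distrib row)
  qed
  finally show ?thesis
    by (simp add: sum_distrib_left sum_distrib_right mult_ac)
qed

lemma quad_form_unit: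
  assumes "k < d"
  shows "quad_form d A (\<lambda>i. if i = k then t else 0) = cnj t * t * A $$ (k,k)"
  using quad_form_add_unit[OF assms, of A "\<lambda>_. 0" t] by (simp add: quad_form_def)

lemma psd_diag_nonneg: "psd d A \<Longrightarrow> k < d \<Longrightarrow> 0 \<le> A $$ (k,k)"
  using psd_quad_form_nonneg[of d A "\<lambda>i. if i = k then 1 else 0"] quad_form_unit[of k d A 1]
  by simp

text \<open>If \<open>A\<^sub>k\<^sub>j \<noteq> 0\<close>, perturbing \<open>e\<^sub>j\<close> by a suitable multiple \<open>t\<close> of \<open>e\<^sub>k\<close> drives the
  quadratic form to \<open>-1\<close>.\<close>

lemma psd_diag_zero_imp_row_zero:
  assumes A: "psd d A" and k: "k < d" and j: "j < d" and diag: "A $$ (k,k) = 0"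
  shows "A $$ (k,j) = 0"
proof (rule ccontr)
  assume nz: "A $$ (k,j) \<noteq> 0"
  define a where "a = A $$ (k,j)"
  define lam where "lam = (Re (A $$ (j,j)) + 1) / (2 * (cmod a)\<^sup>2)"
  define t where "t = - complex_of_real lam * a"
  let ?e = "\<lambda>i. if i = j then (1::complex) else 0"
  have row: "(\<Sum>l<d. A $$ (k,l) * ?e l) = a"
    using j by (simp add: a_def if_distrib cong: if_cong)
  have "(\<Sum>i<d. cnj (?e i) * A $$ (i,k)) = (\<Sum>i<d. if i = j then A $$ (i,k) else 0)"
    by (intro sum.cong refl) simp
  then have col: "(\<Sum>i<d. cnj (?e i) * A $$ (i,k)) = cnj a"
    using j psd_cnj_index[OF A k j] by (simp add: a_def)
  have "0 \<le> quad_form d A (\<lambda>i. ?e i + (if i = k then t else 0))"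
    by (rule psd_quad_form_nonneg[OF A])
  also have "\<dots> = A $$ (j,j) + cnj t * a + t * cnj a"
    unfolding quad_form_add_unit[OF k] row col quad_form_unit[OF j] diag by simp
  finally have "0 \<le> Re (A $$ (j,j)) + Re (cnj t * a + t * cnj a)"
    by (simp add: less_eq_complex_def)
  moreover have "Re (cnj t * a + t * cnj a) = - 2 * lam * (cmod a)\<^sup>2"
    unfolding t_def cmod_power2 by (simp add: algebra_simps power2_eq_square)
  moreover have "(cmod a)\<^sup>2 > 0"
    using nz a_def by simp
  ultimately show False
    unfolding lam_def by (simp add: field_simps)
qed

section \<open>Positivity of the trace of a product\<close>

lemma trace_mult_eq_sum:
  assumes "A \<in> carrier_mat d d" "B \<in> carrier_mat d d"
  shows "trace (A * B) = (\<Sum>i<d. \<Sum>j<d. A $$ (i,j) * B $$ (j,i))"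
  using assms unfolding trace_def
  by (auto simp: scalar_prod_def lessThan_atLeast0 intro!: sum.cong)

lemma trace_mult_comm:
  assumes "A \<in> carrier_mat d d" "B \<in> carrier_mat d d"
  shows "trace (A * B) = trace (B * A)"
  unfolding trace_mult_eq_sum[OF assms] trace_mult_eq_sum[OF assms(2,1)]
  by (subst sum.swap) (simp add: mult.commute)

lemma trace_add: "A \<in> carrier_mat d d \<Longrightarrow> B \<in> carrier_mat d d \<Longrightarrow> trace (A + B) = trace A + trace B"
  unfolding trace_def by (simp add: sum.distrib)

lemma trace_minus: "A \<in> carrier_mat d d \<Longrightarrow> B \<in> carrier_mat d d \<Longrightarrow> trace (A - B) = trace A - trace B"
  unfolding trace_def by (simp add: sum_subtractf)

lemma trace_smult: "A \<in> carrier_mat d d \<Longrightarrow> trace (c \<cdot>\<^sub>m A) = c * trace A"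
  unfolding trace_def by (simp add: sum_distrib_left)

lemma trace_one: "trace (1\<^sub>m d) = of_nat d"
  unfolding trace_def by simp

lemma trace_psd_nonneg: "psd d A \<Longrightarrow> 0 \<le> trace A"
  using psd_carrier[of d A] by (auto simp: trace_def psd_diag_nonneg intro!: sum_nonneg)

lemma outer_carrier [simp]: "outer d g \<in> carrier_mat d d"
  by (simp add: outer_def)

lemma trace_mult_outer: "W \<in> carrier_mat d d \<Longrightarrow> trace (W * outer d g) = quad_form d W g"
  unfolding trace_mult_eq_sum[OF _ outer_carrier] quad_form_def
  by (auto simp: outer_def mult_ac intro!: sum.cong)

definition schur_complement :: "nat \<Rightarrow> nat \<Rightarrow> complex mat \<Rightarrow> complex mat" where
  "schur_complement d k A = A - (1 / A $$ (k,k)) \<cdot>\<^sub>m outer d (\<lambda>i. A $$ (i,k))"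

lemma schur_complement_carrier: "A \<in> carrier_mat d d \<Longrightarrow> schur_complement d k A \<in> carrier_mat d d"
  by (simp add: schur_complement_def minus_carrier_mat)

lemma schur_complement_index:
  assumes "psd d A" "i < d" "j < d" "k < d"
  shows "schur_complement d k A $$ (i,j) = A $$ (i,j) - A $$ (i,k) * A $$ (k,j) / A $$ (k,k)"
  using assms psd_carrier[OF assms(1)] psd_cnj_index[OF assms(1,3,4)]
  by (simp add: schur_complement_def outer_def)

lemma psd_schur_complement:
  assumes A: "psd d A" and k: "k < d" and nz: "A $$ (k,k) \<noteq> 0"
  shows "psd d (schur_complement d k A)"
proof (rule psdI)
  have cA: "A \<in> carrier_mat d d" using psd_carrier[OF A] .
  define a where "a = A $$ (k,k)"
  have ca: "cnj a = a" unfolding a_def using psd_cnj_index[OF A k k] .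
  show "schur_complement d k A \<in> carrier_mat d d" using schur_complement_carrier[OF cA] .
  show "adjoint_mat (schur_complement d k A) = schur_complement d k A"
    using cA ca unfolding schur_complement_def a_def
    by (simp add: adjoint_mat_minus adjoint_mat_smult psd_adjoint_mat[OF A])
  fix f
  define S where "S = (\<Sum>j<d. A $$ (k,j) * f j)"
  define t where "t = - S / a"
  \<comment> \<open>the quadratic form of the complement at \<open>f\<close> is that of \<open>A\<close> at \<open>f + t e\<^sub>k\<close>\<close>
  have S_col: "(\<Sum>i<d. cnj (A $$ (i,k)) * f i) = S"
    unfolding S_def by (intro sum.cong refl) (simp add: psd_cnj_index[OF A _ k])
  have cS_col: "(\<Sum>i<d. cnj (f i) * A $$ (i,k)) = cnj S"
    unfolding S_def by (simp add: psd_cnj_index[OF A k] mult.commute)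
  have "quad_form d (schur_complement d k A) f = quad_form d A f - S * cnj S / a"
    unfolding schur_complement_def a_def
    using cA by (simp add: quad_form_minus quad_form_smult quad_form_outer S_col complex_norm_square
        del: of_real_power)
  also have "\<dots> = quad_form d A f + cnj t * S + t * cnj S + cnj t * t * a"
    unfolding t_def using nz ca by (simp add: a_def field_simps)
  also have "\<dots> = quad_form d A (\<lambda>i. f i + (if i = k then t else 0))"
    unfolding quad_form_add_unit[OF k] S_def[symmetric] cS_col a_def ..
  finally show "0 \<le> quad_form d (schur_complement d k A) f"
    using psd_quad_form_nonneg[OF A] by simp
qed

lemma trace_mult_schur_complement:
  assumes W: "W \<in> carrier_mat d d" and A: "A \<in> carrier_mat d d"
  shows "trace (W * A) =
    trace (W * schur_complement d k A) + quad_form d W (\<lambda>i. A $$ (i,k)) / A $$ (k,k)"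
proof -
  let ?c = "1 / A $$ (k,k)" and ?O = "outer d (\<lambda>i. A $$ (i,k))"
  have WO: "W * ?O \<in> carrier_mat d d" using W by simp
  have "W * schur_complement d k A = W * A - ?c \<cdot>\<^sub>m (W * ?O)"
    unfolding schur_complement_def
    using W A by (simp add: mult_minus_distrib_mat mult_smult_distrib[OF W outer_carrier])
  then show ?thesis
    using W A WO
    by (simp add: trace_minus[OF _ smult_carrier_mat[OF WO]] trace_smult[OF WO] trace_mult_outer)
qed

lemma trace_mult_psd_nonneg_aux:
  assumes W: "psd d W" and "k \<le> d" and "psd d A"
    and "\<forall>i<d. \<forall>j<d. i < k \<or> j < k \<longrightarrow> A $$ (i,j) = 0"
  shows "0 \<le> trace (W * A)"
  using assms(2-)
proof (induction k arbitrary: A rule: inc_induct)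
  case base
  then show ?case
    using psd_carrier[OF W] by (simp add: trace_mult_eq_sum psd_carrier)
next
  case (step k)
  have A: "psd d A" and k: "k < d" and cW: "W \<in> carrier_mat d d" and cA: "A \<in> carrier_mat d d"
    using step psd_carrier[OF W] psd_carrier[OF step.prems(1)] by auto
  show ?case
  proof (cases "A $$ (k,k) = 0")
    case True
    have "A $$ (k,j) = 0" "A $$ (j,k) = 0" if "j < d" for j
      using psd_diag_zero_imp_row_zero[OF A k that True] psd_cnj_index[OF A k that] by auto
    then have "\<forall>i<d. \<forall>j<d. i < Suc k \<or> j < Suc k \<longrightarrow> A $$ (i,j) = 0"
      using step.prems(2) by (metis less_Suc_eq)
    then show ?thesis
      using step.IH A by blast
  next
    case False
    let ?S = "schur_complement d k A"
    have "\<forall>i<d. \<forall>j<d. i < Suc k \<or> j < Suc k \<longrightarrow> ?S $$ (i,j) = 0"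
      using step.prems(2) False k by (auto simp: schur_complement_index[OF A] less_Suc_eq)
    then have "0 \<le> trace (W * ?S)"
      using step.IH psd_schur_complement[OF A k False] by blast
    moreover have "0 \<le> quad_form d W (\<lambda>i. A $$ (i,k)) / A $$ (k,k)"
      using psd_quad_form_nonneg[OF W] psd_diag_nonneg[OF A k] False
      by (auto simp: less_eq_complex_def Re_divide Im_divide intro!: divide_nonneg_nonneg)
    ultimately show ?thesis
      unfolding trace_mult_schur_complement[OF cW cA, of k] by simp
  qed
qed

lemma trace_mult_psd_nonneg: "psd d W \<Longrightarrow> psd d A \<Longrightarrow> 0 \<le> trace (W * A)"
  using trace_mult_psd_nonneg_aux[of d W 0] by simp

lemma cmod_sum_cnj_mult_le_sqnorm:
  "(cmod (\<Sum>i<d. cnj (f i) * g i))\<^sup>2 \<le> sqnorm d f * sqnorm d g"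
proof -
  have "cmod (\<Sum>i<d. cnj (f i) * g i) \<le> (\<Sum>i<d. cmod (f i) * cmod (g i))"
    by (rule order_trans[OF norm_sum]) (simp add: norm_mult)
  then have "(cmod (\<Sum>i<d. cnj (f i) * g i))\<^sup>2 \<le> (\<Sum>i<d. cmod (f i) * cmod (g i))\<^sup>2"
    by (simp add: power_mono)
  also have "\<dots> \<le> sqnorm d f * sqnorm d g"
    unfolding sqnorm_def by (rule Cauchy_Schwarz_ineq_sum)
  finally show ?thesis .
qed

lemma psd_sqnorm_one_minus_outer: "psd d (of_real (sqnorm d f) \<cdot>\<^sub>m 1\<^sub>m d - outer d f)"
proof (rule psdI)
  show "of_real (sqnorm d f) \<cdot>\<^sub>m 1\<^sub>m d - outer d f \<in> carrier_mat d d"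
    by (simp add: minus_carrier_mat)
  show "adjoint_mat (of_real (sqnorm d f) \<cdot>\<^sub>m 1\<^sub>m d - outer d f) =
      of_real (sqnorm d f) \<cdot>\<^sub>m 1\<^sub>m d - outer d f"
    by (simp add: adjoint_mat_minus[of _ d d] adjoint_mat_smult)
  fix g
  have "quad_form d (of_real (sqnorm d f) \<cdot>\<^sub>m 1\<^sub>m d - outer d f) g =
      of_real (sqnorm d f * sqnorm d g - (cmod (\<Sum>i<d. cnj (f i) * g i))\<^sup>2)"
    by (simp add: quad_form_minus quad_form_smult quad_form_one quad_form_outer del: of_real_power)
  then show "0 \<le> quad_form d (of_real (sqnorm d f) \<cdot>\<^sub>m 1\<^sub>m d - outer d f) g"
    using cmod_sum_cnj_mult_le_sqnorm[where d=d and f=f and g=g] by (simp add: less_eq_complex_def)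
qed

lemma density_quad_form_le_sqnorm:
  assumes "density d \<rho>"
  shows "quad_form d \<rho> f \<le> of_real (sqnorm d f)"
proof -
  have \<rho>: "psd d \<rho>" "trace \<rho> = 1" and c\<rho>: "\<rho> \<in> carrier_mat d d"
    using assms psd_carrier by (auto simp: density_def)
  let ?c = "complex_of_real (sqnorm d f)"
  have "(?c \<cdot>\<^sub>m 1\<^sub>m d - outer d f) * \<rho> = ?c \<cdot>\<^sub>m \<rho> - outer d f * \<rho>"
    using c\<rho> by (simp add: minus_mult_distrib_mat[of _ d d] mult_smult_assoc_mat[of _ d d])
  then have "trace ((?c \<cdot>\<^sub>m 1\<^sub>m d - outer d f) * \<rho>) = ?c - quad_form d \<rho> f"
    using c\<rho> \<rho>(2) trace_mult_comm[OF outer_carrier c\<rho>, of f]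
    by (simp add: trace_minus[OF smult_carrier_mat[OF c\<rho>] mult_carrier_mat[OF outer_carrier c\<rho>]]
        trace_smult trace_mult_outer)
  moreover have "0 \<le> trace ((?c \<cdot>\<^sub>m 1\<^sub>m d - outer d f) * \<rho>)"
    by (rule trace_mult_psd_nonneg[OF psd_sqnorm_one_minus_outer \<rho>(1)])
  ultimately show ?thesis
    by simp
qed

section \<open>The depolarizing channel\<close>

lemma density_dim_pos: "density d \<rho> \<Longrightarrow> 0 < d"
  by (cases d) (auto simp: density_def trace_def psd_def)

lemma depol_carrier [simp]: "R \<in> carrier_mat d d \<Longrightarrow> depol p d R \<in> carrier_mat d d"
  by (simp add: depol_def)

lemma quad_form_depol:
  "R \<in> carrier_mat d d \<Longrightarrow>
   quad_form d (depol p d R) f = of_real (p / real d * sqnorm d f) + of_real (1 - p) * quad_form d R f"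
  unfolding depol_def by (simp add: quad_form_add quad_form_smult quad_form_one)

lemma trace_mult_depol:
  assumes W: "W \<in> carrier_mat d d" and R: "R \<in> carrier_mat d d"
  shows "trace (W * depol p d R) = of_real (p / real d) * trace W + of_real (1 - p) * trace (W * R)"
proof -
  have I: "of_real (p / real d) \<cdot>\<^sub>m 1\<^sub>m d \<in> carrier_mat d d" by simp
  have R': "of_real (1 - p) \<cdot>\<^sub>m R \<in> carrier_mat d d" using R by simp
  have "W * depol p d R = of_real (p / real d) \<cdot>\<^sub>m W + of_real (1 - p) \<cdot>\<^sub>m (W * R)"
    unfolding depol_def mult_add_distrib_mat[OF W I R'] mult_smult_distrib[OF W one_carrier_mat]
      mult_smult_distrib[OF W R] right_mult_one_mat[OF W] ..
  then show ?thesis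
    using W R by (simp add: trace_add[of _ d] trace_smult[of _ d])
qed

lemma density_depol:
  assumes \<rho>: "density d \<rho>" and p: "0 \<le> p" "p \<le> 1"
  shows "density d (depol p d \<rho>)"
proof -
  have A: "psd d \<rho>" "trace \<rho> = 1" and c\<rho>: "\<rho> \<in> carrier_mat d d"
    using \<rho> psd_carrier by (auto simp: density_def)
  have "psd d (depol p d \<rho>)"
  proof (rule psdI)
    show "adjoint_mat (depol p d \<rho>) = depol p d \<rho>"
      unfolding depol_def using c\<rho>
      by (simp add: adjoint_mat_add[of _ d d] adjoint_mat_smult psd_adjoint_mat[OF A(1)])
    show "0 \<le> quad_form d (depol p d \<rho>) f" for f
      using psd_quad_form_nonneg[OF A(1), of f] sqnorm_nonneg[of d f] p
      by (simp add: quad_form_depol[OF c\<rho>] less_eq_complex_def)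
  qed (simp add: c\<rho>)
  moreover have "trace (depol p d \<rho>) = 1"
    using trace_mult_depol[OF one_carrier_mat c\<rho>, of p] density_dim_pos[OF \<rho>] A(2) c\<rho>
    by (simp add: trace_one left_mult_one_mat[OF depol_carrier[OF c\<rho>]])
  ultimately show ?thesis
    by (simp add: density_def)
qed

text \<open>The constant comes from \<open>D(\<rho>) \<le> (p/d + 1 - p) I\<close> and \<open>(p/d) I \<le> D(\<sigma>)\<close>.\<close>

lemma depol_loewner_le:
  assumes \<rho>: "density d \<rho>" and \<sigma>: "density d \<sigma>" and p: "0 < p" "p \<le> 1"
  shows "loewner_le d (depol p d \<rho>) (of_real (1 + real d * (1 - p) / p) \<cdot>\<^sub>m depol p d \<sigma>)"
  unfolding loewner_le_def
proof (rule psdI)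
  define r where "r = 1 + real d * (1 - p) / p"
  have c\<rho>: "\<rho> \<in> carrier_mat d d" and c\<sigma>: "\<sigma> \<in> carrier_mat d d"
    using \<rho> \<sigma> psd_carrier by (auto simp: density_def)
  have d: "0 < d" using density_dim_pos[OF \<rho>] .
  show "of_real r \<cdot>\<^sub>m depol p d \<sigma> - depol p d \<rho> \<in> carrier_mat d d"
    using c\<rho> by (simp add: minus_carrier_mat)
  show "adjoint_mat (of_real r \<cdot>\<^sub>m depol p d \<sigma> - depol p d \<rho>) =
      of_real r \<cdot>\<^sub>m depol p d \<sigma> - depol p d \<rho>"
    using density_depol[OF \<rho> less_imp_le[OF p(1)] p(2)] density_depol[OF \<sigma> less_imp_le[OF p(1)] p(2)]
      c\<rho> c\<sigma>
    by (simp add: adjoint_mat_minus[of _ d d] adjoint_mat_smult psd_adjoint_mat[of d] density_def)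
  fix f
  have q\<rho>: "quad_form d \<rho> f \<le> of_real (sqnorm d f)"
    by (rule density_quad_form_le_sqnorm[OF \<rho>])
  have q\<sigma>: "0 \<le> quad_form d \<sigma> f"
    using \<sigma> psd_quad_form_nonneg by (auto simp: density_def)
  define a where "a = complex_of_real (p / real d)"
  define b where "b = complex_of_real (1 - p)"
  have ra: "of_real r * a = a + b"
    unfolding r_def a_def b_def using p d by (simp add: field_simps)
  have "quad_form d (of_real r \<cdot>\<^sub>m depol p d \<sigma> - depol p d \<rho>) f =
      of_real r * (a * of_real (sqnorm d f) + b * quad_form d \<sigma> f)
        - (a * of_real (sqnorm d f) + b * quad_form d \<rho> f)"
    using c\<rho> c\<sigma> unfolding a_def b_def
    by (simp add: quad_form_minus quad_form_smult quad_form_depol)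
  also have "\<dots> = b * (of_real (sqnorm d f) - quad_form d \<rho> f) + of_real r * b * quad_form d \<sigma> f
      + (of_real r * a - a - b) * of_real (sqnorm d f)"
    by (simp add: algebra_simps)
  also have "\<dots> = of_real (1 - p) * (of_real (sqnorm d f) - quad_form d \<rho> f)
      + of_real (r * (1 - p)) * quad_form d \<sigma> f"
    unfolding ra b_def by simp
  also have "0 \<le> \<dots>"
    using q\<rho> q\<sigma> p r_def
    by (intro add_nonneg_nonneg mult_nonneg_nonneg) (auto simp: less_eq_complex_def)
  finally show "0 \<le> quad_form d (of_real r \<cdot>\<^sub>m depol p d \<sigma> - depol p d \<rho>) f" .
qed

section \<open>Max-relative entropy bounds\<close>

lemma supp_eq_carrier_vec_if_kernel_trivial:
  assumes A: "A \<in> carrier_mat d d"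
    and ker: "\<And>v. v \<in> carrier_vec d \<Longrightarrow> A *\<^sub>v v = 0\<^sub>v d \<Longrightarrow> v = 0\<^sub>v d"
  shows "supp d A = carrier_vec d"
proof
  show "supp d A \<subseteq> carrier_vec d"
    using A by (auto simp: supp_def)
  have "det A \<noteq> 0"
    using det_0_iff_vec_prod_zero[OF A] ker by blast
  then have "A \<in> Units (ring_mat TYPE(complex) d ())"
    by (rule det_non_zero_imp_unit[OF A])
  then obtain B where B: "B \<in> carrier_mat d d" and AB: "A * B = 1\<^sub>m d"
    by (auto simp: Units_def ring_mat_def)
  show "carrier_vec d \<subseteq> supp d A"
  proof
    fix u :: "complex vec" assume u: "u \<in> carrier_vec d"
    then have "A *\<^sub>v (B *\<^sub>v u) = u"
      using AB by (simp flip: assoc_mult_mat_vec[OF A B u])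
    then show "u \<in> supp d A"
      unfolding supp_def using B u by (auto intro!: exI[of _ "B *\<^sub>v u"])
  qed
qed

lemma supp_depol:
  assumes R: "psd d R" and p: "0 < p" "p \<le> 1" and d: "0 < d"
  shows "supp d (depol p d R) = carrier_vec d"
proof (rule supp_eq_carrier_vec_if_kernel_trivial)
  have cR: "R \<in> carrier_mat d d" using psd_carrier[OF R] .
  then show "depol p d R \<in> carrier_mat d d" by simp
  fix v :: "complex vec" assume v: "v \<in> carrier_vec d" and Dv: "depol p d R *\<^sub>v v = 0\<^sub>v d"
  have "vec d (\<lambda>i. v $ i) = v"
    using v by auto
  then have "Re (quad_form d (depol p d R) (\<lambda>i. v $ i)) = 0"
    using v Dv by (simp add: quad_form_eq_scalar_prod[OF depol_carrier[OF cR]])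
  then have "p / real d * sqnorm d (\<lambda>i. v $ i) + (1 - p) * Re (quad_form d R (\<lambda>i. v $ i)) = 0"
    by (simp add: quad_form_depol[OF cR])
  moreover have "0 \<le> (1 - p) * Re (quad_form d R (\<lambda>i. v $ i))"
    using psd_quad_form_nonneg[OF R] p by (simp add: less_eq_complex_def)
  moreover have "0 < p / real d"
    using p d by simp
  ultimately have "sqnorm d (\<lambda>i. v $ i) \<le> 0"
    by (smt (verit) mult_pos_pos)
  then have "sqnorm d (\<lambda>i. v $ i) = 0"
    using sqnorm_nonneg[of d "\<lambda>i. v $ i"] by linarith
  then show "v = 0\<^sub>v d"
    using v by (intro eq_vecI) (auto simp: sqnorm_eq_0_iff)
qed

lemma Dmax_le_log:
  assumes \<rho>: "density d \<rho>" and \<sigma>: "density d \<sigma>" and supp: "supp d \<rho> \<subseteq> supp d \<sigma>"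
    and le: "loewner_le d \<rho> (of_real r \<cdot>\<^sub>m \<sigma>)"
  shows "Dmax d \<rho> \<sigma> \<le> ereal (log 2 r)"
proof -
  define S where "S = {\<mu>::real. loewner_le d \<rho> (of_real \<mu> \<cdot>\<^sub>m \<sigma>)}"
  have c\<rho>: "\<rho> \<in> carrier_mat d d" and c\<sigma>: "\<sigma> \<in> carrier_mat d d"
    using \<rho> \<sigma> psd_carrier by (auto simp: density_def)
  have ge1: "1 \<le> \<mu>" if "\<mu> \<in> S" for \<mu>
  proof -
    have "0 \<le> trace (of_real \<mu> \<cdot>\<^sub>m \<sigma> - \<rho>)"
      using that by (simp add: S_def loewner_le_def trace_psd_nonneg)
    also have "trace (of_real \<mu> \<cdot>\<^sub>m \<sigma> - \<rho>) = of_real \<mu> - 1"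
      using \<rho> \<sigma> c\<rho> c\<sigma> by (simp add: trace_minus[of _ d] trace_smult density_def)
    finally show ?thesis
      by (simp add: less_eq_complex_def)
  qed
  have "r \<in> S" using le by (simp add: S_def)
  then have "1 \<le> Inf S" and "Inf S \<le> r"
    using ge1 by (auto intro!: cInf_greatest cInf_lower bdd_belowI[of S 1])
  then have "log 2 (Inf S) \<le> log 2 r"
    by (intro log_mono) auto
  then show ?thesis
    unfolding Dmax_def S_def[symmetric] using supp by simp
qed

lemma Dmax_depol_le:
  assumes \<rho>: "density d \<rho>" and \<sigma>: "density d \<sigma>" and p: "0 < p" "p \<le> 1"
  shows "Dmax d (depol p d \<rho>) (depol p d \<sigma>) \<le> ereal (log 2 (1 + real d * (1 - p) / p))"
proof (rule Dmax_le_log[OF density_depol[OF \<rho>] density_depol[OF \<sigma>] _ depol_loewner_le[OF \<rho> \<sigma> p]])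
  show "supp d (depol p d \<rho>) \<subseteq> supp d (depol p d \<sigma>)"
    using \<rho> \<sigma> p density_dim_pos[OF \<rho>] by (simp add: supp_depol density_def)
qed (use p in auto)

lemma Rq_le:
  assumes "finite X" "X \<noteq> {}" "\<And>x x'. x \<in> X \<Longrightarrow> x' \<in> X \<Longrightarrow> Dmax d (\<tau> x) (\<tau> x') \<le> b"
  shows "Rq d X \<tau> \<le> b"
  unfolding Rq_def using assms by (subst Max_le_iff) auto

lemma msum_point_mass:
  assumes X: "finite X" "x0 \<in> X" and \<tau>: "\<And>x. x \<in> X \<Longrightarrow> \<tau> x \<in> carrier_mat d d"
  shows "msum d (\<lambda>x. of_real (if x = x0 then 1 else 0) \<cdot>\<^sub>m \<tau> x) X = \<tau> x0"
proof (rule eq_matI)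
  fix i j assume "i < dim_row (\<tau> x0)" "j < dim_col (\<tau> x0)"
  then have ij: "i < d" "j < d" using \<tau>[OF X(2)] by auto
  have "(\<Sum>x\<in>X. (of_real (if x = x0 then 1 else 0) \<cdot>\<^sub>m \<tau> x) $$ (i,j)) =
        (\<Sum>x\<in>X. if x = x0 then \<tau> x0 $$ (i,j) else 0)"
    using ij by (intro sum.cong refl) (auto simp: \<tau>[THEN carrier_matD(1)] \<tau>[THEN carrier_matD(2)])
  then show "msum d (\<lambda>x. of_real (if x = x0 then 1 else 0) \<cdot>\<^sub>m \<tau> x) X $$ (i,j) = \<tau> x0 $$ (i,j)"
    using ij X by (simp add: msum_def)
qed (use \<tau>[OF X(2)] in \<open>auto simp: msum_def\<close>)

lemma Bq_le_Rq:
  assumes X: "finite X" "x0 \<in> X" and \<tau>: "\<And>x. x \<in> X \<Longrightarrow> \<tau> x \<in> carrier_mat d d"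
  shows "Bq d X \<tau> \<le> Rq d X \<tau>"
proof -
  define \<pi> where "\<pi> x = (if x = x0 then 1 else 0 :: real)" for x
  have "\<pi> \<in> pmfs X"
    using X by (simp add: pmfs_def \<pi>_def)
  then have "Bq d X \<tau> \<le> Max ((\<lambda>x. Dmax d (\<tau> x) (msum d (\<lambda>x'. of_real (\<pi> x') \<cdot>\<^sub>m \<tau> x') X)) ` X)"
    unfolding Bq_def by (rule INF_lower)
  also have "msum d (\<lambda>x'. of_real (\<pi> x') \<cdot>\<^sub>m \<tau> x') X = \<tau> x0"
    unfolding \<pi>_def by (rule msum_point_mass[OF X \<tau>])
  also have "Max ((\<lambda>x. Dmax d (\<tau> x) (\<tau> x0)) ` X) \<le> Rq d X \<tau>"
    unfolding Rq_def using X by (subst Max_le_iff) (auto intro!: Max_ge)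
  finally show ?thesis .
qed

section \<open>Unitary conjugation and the measured disturbance\<close>

lemma scalar_prod_adjoint_mat:
  assumes U: "U \<in> carrier_mat d d" and x: "x \<in> carrier_vec d" and y: "y \<in> carrier_vec d"
  shows "conjugate x \<bullet> (U *\<^sub>v y) = conjugate (adjoint_mat U *\<^sub>v x) \<bullet> y"
proof -
  have "conjugate x \<bullet> (U *\<^sub>v y) = (\<Sum>i<d. \<Sum>k<d. cnj (x $ i) * U $$ (i,k) * y $ k)"
    using U x y by (simp add: scalar_prod_def lessThan_atLeast0 sum_distrib_left mult_ac)
  also have "\<dots> = (\<Sum>k<d. \<Sum>i<d. cnj (x $ i) * U $$ (i,k) * y $ k)"
    by (rule sum.swap)
  also have "\<dots> = conjugate (adjoint_mat U *\<^sub>v x) \<bullet> y"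
    using U x y by (simp add: scalar_prod_def lessThan_atLeast0 sum_distrib_left mult_ac)
  finally show ?thesis .
qed

lemma quad_form_conj:
  assumes U: "U \<in> carrier_mat d d" and R: "R \<in> carrier_mat d d"
  shows "quad_form d (U * R * adjoint_mat U) f = quad_form d R (\<lambda>i. (adjoint_mat U *\<^sub>v vec d f) $ i)"
proof -
  define w where "w = adjoint_mat U *\<^sub>v vec d f"
  have w: "w \<in> carrier_vec d" using adjoint_mat_carrier[OF U] by (simp add: w_def)
  have "(U * R * adjoint_mat U) *\<^sub>v vec d f = (U * R) *\<^sub>v w"
    unfolding w_def by (simp add: assoc_mult_mat_vec[OF mult_carrier_mat[OF U R] adjoint_mat_carrier[OF U]])
  also have "\<dots> = U *\<^sub>v (R *\<^sub>v w)"
    by (rule assoc_mult_mat_vec[OF U R w])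
  finally have "(U * R * adjoint_mat U) *\<^sub>v vec d f = U *\<^sub>v (R *\<^sub>v w)" .
  then have "quad_form d (U * R * adjoint_mat U) f = conjugate (vec d f) \<bullet> (U *\<^sub>v (R *\<^sub>v w))"
    using U R by (metis quad_form_eq_scalar_prod adjoint_mat_carrier mult_carrier_mat)
  also have "\<dots> = conjugate w \<bullet> (R *\<^sub>v w)"
    unfolding w_def using R w by (intro scalar_prod_adjoint_mat[OF U]) (auto simp: w_def)
  also have "\<dots> = quad_form d R (\<lambda>i. w $ i)"
  proof -
    have "vec d (\<lambda>i. w $ i) = w" using w by auto
    then show ?thesis using R by (simp add: quad_form_eq_scalar_prod)
  qed
  finally show ?thesis unfolding w_def .
qed

lemma trace_unitary_conj:
  assumes U: "unitary d U" and R: "R \<in> carrier_mat d d"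
  shows "trace (U * R * adjoint_mat U) = trace R"
proof -
  have cU: "U \<in> carrier_mat d d" and UU: "adjoint_mat U * U = 1\<^sub>m d"
    using U by (auto simp: unitary_def)
  have "trace (U * R * adjoint_mat U) = trace (adjoint_mat U * (U * R))"
    using cU R by (simp add: trace_mult_comm[of _ d])
  also have "\<dots> = trace R"
    using cU R UU by (simp flip: assoc_mult_mat[of _ d d _ d _ d])
  finally show ?thesis .
qed

lemma density_unitary_conj:
  assumes U: "unitary d U" and \<rho>: "density d \<rho>"
  shows "density d (U * \<rho> * adjoint_mat U)"
proof -
  have cU: "U \<in> carrier_mat d d" and A: "psd d \<rho>" and c\<rho>: "\<rho> \<in> carrier_mat d d"
    using U \<rho> psd_carrier by (auto simp: unitary_def density_def)
  have "psd d (U * \<rho> * adjoint_mat U)"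
  proof (rule psdI)
    show "U * \<rho> * adjoint_mat U \<in> carrier_mat d d"
      using cU c\<rho> by (metis adjoint_mat_carrier mult_carrier_mat)
    have "adjoint_mat (U * \<rho> * adjoint_mat U) = adjoint_mat (adjoint_mat U) * adjoint_mat (U * \<rho>)"
      using cU c\<rho> by (intro adjoint_mat_mult[of _ d d _ d]) auto
    also have "\<dots> = U * (\<rho> * adjoint_mat U)"
      by (simp add: adjoint_mat_mult[OF cU c\<rho>] psd_adjoint_mat[OF A])
    also have "\<dots> = U * \<rho> * adjoint_mat U"
      using cU c\<rho> by (simp add: assoc_mult_mat[of _ d d _ d _ d])
    finally show "adjoint_mat (U * \<rho> * adjoint_mat U) = U * \<rho> * adjoint_mat U" .
    show "0 \<le> quad_form d (U * \<rho> * adjoint_mat U) f" for f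
      unfolding quad_form_conj[OF cU c\<rho>] by (rule psd_quad_form_nonneg[OF A])
  qed
  then show ?thesis
    using \<rho> by (simp add: density_def trace_unitary_conj[OF U c\<rho>])
qed

lemma sum_trace_mult_povm:
  assumes O: "povm d C Ob" and S: "S \<in> carrier_mat d d"
  shows "(\<Sum>c\<in>C. trace (Ob c * S)) = trace S"
proof -
  have cO: "\<And>c. c \<in> C \<Longrightarrow> Ob c \<in> carrier_mat d d" and ms: "msum d Ob C = 1\<^sub>m d"
    using O psd_carrier by (auto simp: povm_def)
  have "(\<Sum>c\<in>C. trace (Ob c * S)) = (\<Sum>c\<in>C. \<Sum>i<d. \<Sum>j<d. Ob c $$ (i,j) * S $$ (j,i))"
    using S cO by (intro sum.cong refl) (simp add: trace_mult_eq_sum)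
  also have "\<dots> = (\<Sum>i<d. \<Sum>j<d. msum d Ob C $$ (i,j) * S $$ (j,i))"
    by (subst sum.swap, rule sum.cong, rule refl, subst sum.swap) (simp add: msum_def sum_distrib_right)
  also have "\<dots> = trace (1\<^sub>m d * S)"
    by (simp only: ms trace_mult_eq_sum[OF one_carrier_mat S])
  also have "\<dots> = trace S"
    using S by simp
  finally show ?thesis .
qed

lemma sum_cmod_trace_mult_depol_diff_le:
  assumes O: "povm d C Ob" and S: "density d S" and p: "0 \<le> p"
  shows "(\<Sum>c\<in>C. cmod (trace (Ob c * S) - trace (Ob c * depol p d S))) \<le> 2 * p"
proof -
  have pO: "\<And>c. c \<in> C \<Longrightarrow> psd d (Ob c)" and pS: "psd d S" and tS: "trace S = 1"
    using O S by (auto simp: povm_def density_def)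
  have cS: "S \<in> carrier_mat d d" using psd_carrier[OF pS] .
  have d: "0 < d" using density_dim_pos[OF S] .
  have "cmod (trace (Ob c * S) - trace (Ob c * depol p d S))
      \<le> p * Re (trace (Ob c * S)) + p / real d * Re (trace (Ob c * 1\<^sub>m d))"
    if c: "c \<in> C" for c
  proof -
    have cO: "Ob c \<in> carrier_mat d d" using psd_carrier[OF pO[OF c]] .
    have "trace (Ob c * S) - trace (Ob c * depol p d S)
        = of_real p * trace (Ob c * S) - of_real (p / real d) * trace (Ob c)"
      unfolding trace_mult_depol[OF cO cS] by (simp add: algebra_simps)
    then have "cmod (trace (Ob c * S) - trace (Ob c * depol p d S))
        \<le> p * cmod (trace (Ob c * S)) + p / real d * cmod (trace (Ob c))"
      using p by (simp only:)
        (rule order_trans[OF norm_triangle_ineq4], simp add: norm_mult norm_divide)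
    also have "\<dots> = p * Re (trace (Ob c * S)) + p / real d * Re (trace (Ob c * 1\<^sub>m d))"
      using trace_mult_psd_nonneg[OF pO[OF c] pS] trace_psd_nonneg[OF pO[OF c]] cO
      by (simp add: cmod_eq_Re less_eq_complex_def)
    finally show ?thesis .
  qed
  then have "(\<Sum>c\<in>C. cmod (trace (Ob c * S) - trace (Ob c * depol p d S)))
      \<le> (\<Sum>c\<in>C. p * Re (trace (Ob c * S)) + p / real d * Re (trace (Ob c * 1\<^sub>m d)))"
    by (rule sum_mono)
  also have "\<dots> = p * Re (\<Sum>c\<in>C. trace (Ob c * S)) + p / real d * Re (\<Sum>c\<in>C. trace (Ob c * 1\<^sub>m d))"
    by (simp add: sum.distrib sum_distrib_left sum_divide_distrib Re_sum)
  also have "\<dots> = 2 * p"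
    using d cS tS by (simp add: sum_trace_mult_povm[OF O] trace_one)
  finally show ?thesis .
qed

lemma Gamma_depol_le:
  assumes X: "finite X" "X \<noteq> {}" and \<rho>: "\<forall>x\<in>X. density d (\<rho> x)"
    and U: "unitary d U" and O: "povm d C Ob" and p: "0 \<le> p"
  shows "Gamma_depol p d X \<rho> U C Ob \<le> 2 * p"
  unfolding Gamma_depol_def using X
  by (subst Max_le_iff)
     (auto intro!: sum_cmod_trace_mult_depol_diff_le[OF O density_unitary_conj[OF U] p] simp: \<rho>)

lemma Gamma_depol_nonneg:
  assumes "finite X" "X \<noteq> {}"
  shows "0 \<le> Gamma_depol p d X \<rho> U C Ob"
  unfolding Gamma_depol_def using assms
  by (subst Max_ge_iff) (auto intro!: sum_nonneg)

lemma log_depol_ratio_le: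
  assumes d: "0 < d" and p: "p \<le> 1" and G: "0 < G" "G \<le> 2 * p"
  shows "log 2 (1 + real d * (1 - p) / p) \<le> log 2 ((1 - 2 * real d) + 4 * real d / G)"
proof (rule log_mono)
  have "0 < p" using G by simp
  have "4 * real d / (2 * p) \<le> 4 * real d / G"
    using G d by (intro divide_left_mono) auto
  moreover have "1 + real d * (1 - p) / p = 1 - 2 * real d + 4 * real d / (2 * p) - real d * (1 - p) / p"
    using \<open>0 < p\<close> by (simp add: field_simps)
  moreover have "0 \<le> real d * (1 - p) / p"
    using \<open>0 < p\<close> p by simp
  ultimately show "1 + real d * (1 - p) / p \<le> (1 - 2 * real d) + 4 * real d / G"
    by linarith
  show "0 < 1 + real d * (1 - p) / p"
    using \<open>0 < p\<close> p by (simp add: add_pos_nonneg)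
qed simp

theorem corollary3:
  fixes X :: "'x set" and C :: "'c set" and d :: nat and p :: real
    and \<rho> :: "'x \<Rightarrow> complex mat" and U :: "complex mat" and Ob :: "'c \<Rightarrow> complex mat"
  assumes "finite X" and "X \<noteq> {}"
    and "\<forall>x\<in>X. density d (\<rho> x)"
    and "unitary d U"
    and "povm d C Ob"
    and "0 \<le> p" and "p \<le> 1"
  shows "Bq d X (\<lambda>x. depol p d (\<rho> x)) \<le> Rq d X (\<lambda>x. depol p d (\<rho> x)) \<and>
         Rq d X (\<lambda>x. depol p d (\<rho> x)) \<le>
           (if Gamma_depol p d X \<rho> U C Ob = 0 then \<infinity>
            else ereal (log 2 ((1 - 2 * real d) + 4 * real d / Gamma_depol p d X \<rho> U C Ob)))"
proof
  obtain x0 where x0: "x0 \<in> X" using assms(2) by blast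
  have d: "0 < d" using density_dim_pos assms(3) x0 by blast
  show "Bq d X (\<lambda>x. depol p d (\<rho> x)) \<le> Rq d X (\<lambda>x. depol p d (\<rho> x))"
    using assms(3) psd_carrier by (intro Bq_le_Rq[OF assms(1) x0]) (auto simp: density_def)
  let ?G = "Gamma_depol p d X \<rho> U C Ob"
  show "Rq d X (\<lambda>x. depol p d (\<rho> x)) \<le>
      (if ?G = 0 then \<infinity> else ereal (log 2 ((1 - 2 * real d) + 4 * real d / ?G)))"
  proof (cases "?G = 0")
    case False
    have G: "0 < ?G" "?G \<le> 2 * p"
      using False Gamma_depol_nonneg[OF assms(1,2), of p d \<rho> U C Ob] Gamma_depol_le[OF assms(1-6)]
      by auto
    have "Rq d X (\<lambda>x. depol p d (\<rho> x)) \<le> ereal (log 2 (1 + real d * (1 - p) / p))"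
      using G assms(3,7) by (intro Rq_le[OF assms(1,2)] Dmax_depol_le) auto
    also have "\<dots> \<le> ereal (log 2 ((1 - 2 * real d) + 4 * real d / ?G))"
      using log_depol_ratio_le[OF d assms(7) G] by simp
    finally show ?thesis using False by simp
  qed simp
qed

end
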